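(* Let $\mathbbm{k}$ be an algebraically closed field of characteristic $0$, and let $\mathscr{A}_1$ be the connected cochain DG algebra whose underlying graded algebra is the free algebra $\mathscr{A}_1^{\#}=\mathbbm{k}\langle x_1,x_2,x_3\rangle$ with $|x_1|=|x_2|=|x_3|=1$, and whose differential is determined by $\partial(x_1)=x_3^2$, $\partial(x_2)=x_2^2$, $\partial(x_3)=0$ (extended by the graded Leibniz rule). Then the cohomology ring of $\mathscr{A}_1$ is $$H(\mathscr{A}_1)=\frac{\mathbbm{k}[\lceil x_3 \rceil, \lceil x_1x_3+x_3x_1 \rceil]}{( \lceil x_3\rceil^2 )},$$ i.e. it is the commutative algebra generated by the classes $\lceil x_3\rceil$ (degree $1$) and $\lceil x_1x_3+x_3x_1\rceil$ (degree $2$) subject only to $\lceil x_3\rceil^2=0$.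
   Context: A cochain DG algebra is a $\mathbb{Z}$-graded algebra $\mathscr{A}$ with a degree $1$ differential $\partial$ satisfying $\partial^2=0$ and $\partial(ab)=\partial(a)b+(-1)^{|a|}a\partial(b)$ for homogeneous $a,b$. For a cocycle $z$, $\lceil z\rceil$ denotes its cohomology class in $H(\mathscr{A})$. *)

theory Defs
  imports "HOL-Computational_Algebra.Polynomial"
begin

datatype gen = X1 | X2 | X3

text \<open>An element of the free algebra is a function from words (lists of generators)
  to coefficients; elements of the free algebra are those with finite support.
  Every generator has degree 1, so the degree of a word is its length.\<close>

type_synonym 'k fa = "gen list \<Rightarrow> 'k"

definition fa_finsupp :: "'k::zero fa \<Rightarrow> bool" where
  "fa_finsupp f \<longleftrightarrow> finite {w. f w \<noteq> 0}"

definition fa_zero :: "'k::zero fa" where "fa_zero = (\<lambda>w. 0)"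
definition fa_one :: "'k::{zero,one} fa" where "fa_one = (\<lambda>w. if w = [] then 1 else 0)"
definition fa_gen :: "gen \<Rightarrow> 'k::{zero,one} fa" where
  "fa_gen x = (\<lambda>w. if w = [x] then 1 else 0)"
definition fa_add :: "'k::plus fa \<Rightarrow> 'k fa \<Rightarrow> 'k fa" where
  "fa_add f g = (\<lambda>w. f w + g w)"
definition fa_minus :: "'k::minus fa \<Rightarrow> 'k fa \<Rightarrow> 'k fa" where
  "fa_minus f g = (\<lambda>w. f w - g w)"
definition fa_smult :: "'k::times \<Rightarrow> 'k fa \<Rightarrow> 'k fa" where
  "fa_smult c f = (\<lambda>w. c * f w)"

definition fa_mult :: "'k::comm_semiring_1 fa \<Rightarrow> 'k fa \<Rightarrow> 'k fa" where
  "fa_mult f g = (\<lambda>w. \<Sum>i\<le>length w. f (take i w) * g (drop i w))"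

definition fa_pow :: "'k::comm_semiring_1 fa \<Rightarrow> nat \<Rightarrow> 'k fa" where
  "fa_pow f n = (fa_mult f ^^ n) fa_one"

fun d_gen :: "gen \<Rightarrow> 'k::comm_ring_1 fa" where
  "d_gen X1 = fa_mult (fa_gen X3) (fa_gen X3)"
| "d_gen X2 = fa_mult (fa_gen X2) (fa_gen X2)"
| "d_gen X3 = fa_zero"

definition fa_word :: "gen list \<Rightarrow> 'k::{zero,one} fa" where
  "fa_word v = (\<lambda>w. if w = v then 1 else 0)"

text \<open>Graded Leibniz rule on words: d(x v) = d(x) v + (-1)^{|x|} x d(v), with |x| = 1.\<close>
fun d_word :: "gen list \<Rightarrow> 'k::comm_ring_1 fa" where
  "d_word [] = fa_zero"
| "d_word (x # v) = fa_minus (fa_mult (d_gen x) (fa_word v)) (fa_mult (fa_gen x) (d_word v))"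

text \<open>Linear extension (meaningful for finitely supported elements).\<close>
definition fa_d :: "'k::comm_ring_1 fa \<Rightarrow> 'k fa" where
  "fa_d f = (\<lambda>w. \<Sum>v\<in>{v. f v \<noteq> 0}. f v * d_word v w)"

definition cocycles :: "'k::comm_ring_1 fa set" where
  "cocycles = {f. fa_finsupp f \<and> fa_d f = fa_zero}"

definition coboundaries :: "'k::comm_ring_1 fa set" where
  "coboundaries = {fa_d g | g. fa_finsupp g}"

definition cohomologous :: "'k::comm_ring_1 fa \<Rightarrow> 'k fa \<Rightarrow> bool" where
  "cohomologous f g \<longleftrightarrow> fa_minus f g \<in> coboundaries"

definition cls_c :: "'k::comm_ring_1 fa" where "cls_c = fa_gen X3"

definition cls_u :: "'k::comm_ring_1 fa" where
  "cls_u = fa_add (fa_mult (fa_gen X1) (fa_gen X3)) (fa_mult (fa_gen X3) (fa_gen X1))"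

text \<open>The polynomial ring k[a,b] is represented as (k[b])[a], i.e. type 'k poly poly,
  outer variable a, inner variable b.\<close>
definition ev_rep :: "'k::comm_ring_1 poly poly \<Rightarrow> 'k fa" where
  "ev_rep p = (\<lambda>w. \<Sum>i\<le>degree p. \<Sum>j\<le>degree (coeff p i).
      coeff (coeff p i) j * fa_mult (fa_pow cls_c i) (fa_pow cls_u j) w)"

end

theory Submission
  imports Defs "HOL-Library.Function_Algebras"
begin

text \<open>Every word begins with x1, x2 or x3, so an element of positive degree is
  z = x1 b + x2 c + x3 a, and by the Leibniz rule z is a cocycle iff db = 0, dc = x2 c and
  da = x3 b; then x2 c = d(x2 c') for the part x2 c' of c starting with x2. Write ~ for
  "cohomologous" and r_n = x3^(n mod 2) u^(n div 2) with u = x1 x3 + x3 x1. If z has degree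
  n + 1, induction gives b ~ l r_n, and as d(x1 e) = x3 x3 e - x1 de this turns z into
  l x1 r_n + x3 a with da = l x3 r_n. For n = 2m, l x3 r_n = d a is a coboundary, which forces
  l = 0 since coboundaries vanish on words without a factor x2 x2 or x3 x3, such as
  x3 (x1 x3)^m; so a is a cocycle and z ~ x3 a ~ x3 r_n = r_(n+1). For n = 2m + 1,
  x1 x3 u^m = u^(m+1) - x3 x1 u^m gives z ~ l r_(n+1) + x3 a' with a' a cocycle, and
  x3 a' ~ x3 x3 u^m = d(x1 u^m) up to a scalar. Evaluating at the same words (x1 x3)^k and
  x3 (x1 x3)^k reads off the coefficients of a^0 b^k and a^1 b^k of a polynomial from its
  image, which determines the kernel of the evaluation map.\<close>

definition lmult :: "gen \<Rightarrow> 'k::comm_semiring_1 fa \<Rightarrow> 'k fa" where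
  "lmult g F = fa_mult (fa_gen g) F"

definition lquot :: "gen \<Rightarrow> 'k fa \<Rightarrow> 'k fa" where
  "lquot g F = (\<lambda>w. F (g # w))"

lemma lquot_apply [simp]: "lquot g F w = F (g # w)"
  by (simp add: lquot_def)

lemma fa_eqI:
  assumes "F [] = G []" and "\<And>g w. F (g # w) = G (g # w)"
  shows "F = G"
proof
  fix w show "F w = G w" using assms by (cases w) auto
qed

lemma lmult_Nil [simp]: "lmult g F [] = 0"
  by (simp add: lmult_def fa_mult_def fa_gen_def)

lemma lmult_Cons [simp]: "lmult g F (x # w) = (if x = g then F w else 0)"
proof -
  have "lmult g F (x # w) = (\<Sum>i\<le>length w. fa_gen g (x # take i w) * F (drop i w))"
    unfolding lmult_def fa_mult_def
    by (simp add: sum.atMost_Suc_shift fa_gen_def del: sum.atMost_Suc)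
  also have "\<dots> = (\<Sum>i\<le>length w. if i = 0 then (if x = g then F w else 0) else 0)"
    by (rule sum.cong) (auto simp: fa_gen_def)
  finally show ?thesis by simp
qed

lemma lquot_lmult [simp]: "lquot g (lmult g F) = F"
  by (simp add: lquot_def)

lemma lmult_add: "lmult g (F + G) = lmult g F + lmult g G"
  by (rule fa_eqI) auto

lemma lmult_diff: "lmult g (F - G) = lmult g F - lmult g (G :: 'k::comm_ring_1 fa)"
  by (rule fa_eqI) auto

lemma lmult_uminus: "lmult g (- F) = - lmult g (F :: 'k::comm_ring_1 fa)"
  by (rule fa_eqI) auto

lemma lmult_zero [simp]: "lmult g 0 = 0"
  by (rule fa_eqI) auto

lemma lmult_smult: "lmult g (fa_smult c F) = fa_smult c (lmult g F)"
  by (rule fa_eqI) (auto simp: fa_smult_def)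

lemma fa_minus_eq: "fa_minus F G = F - G"
  by (simp add: fa_minus_def fun_eq_iff)

lemma fa_smult_apply [simp]: "fa_smult c F w = c * F w"
  by (simp add: fa_smult_def)

lemma fa_smult_zero_left [simp]: "fa_smult 0 (F :: 'k::mult_zero fa) = 0"
  and fa_smult_zero_right [simp]: "fa_smult c (0 :: 'k fa) = 0"
  by (simp_all add: fa_smult_def fun_eq_iff)

lemma fa_smult_add: "fa_smult c (F + G) = fa_smult c F + fa_smult c (G :: 'k::semiring fa)"
  by (simp add: fa_smult_def fun_eq_iff distrib_left)

lemma fa_one_Nil [simp]: "fa_one [] = 1" and fa_one_Cons [simp]: "fa_one (x # w) = 0"
  by (auto simp: fa_one_def)

lemma fa_decompose:
  "F = fa_smult (F []) fa_one + lmult X1 (lquot X1 F) + lmult X2 (lquot X2 F)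
    + lmult X3 (lquot X3 F)"
proof (rule fa_eqI)
  fix g w show "F (g # w) = (fa_smult (F []) fa_one + lmult X1 (lquot X1 F) + lmult X2 (lquot X2 F)
      + lmult X3 (lquot X3 F)) (g # w)"
    by (cases g) auto
qed simp

lemma fa_gen_eq_lmult: "fa_gen g = lmult g fa_one"
  by (rule fa_eqI) (auto simp: fa_gen_def fa_one_def)

lemma fa_mult_one_left [simp]: "fa_mult fa_one G = G"
proof
  fix w show "fa_mult fa_one G w = G w"
    unfolding fa_mult_def by (subst sum.cong[OF refl, where h = "\<lambda>i. if i = 0 then G w else 0"])
      (auto simp: fa_one_def)
qed

lemma fa_mult_zero_right [simp]: "fa_mult F 0 = 0"
  by (simp add: fa_mult_def fun_eq_iff)

lemma fa_mult_lmult: "fa_mult (lmult g F) G = lmult g (fa_mult F G)"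
proof (rule fa_eqI)
  fix x w show "fa_mult (lmult g F) G (x # w) = lmult g (fa_mult F G) (x # w)"
    unfolding fa_mult_def by (simp add: sum.atMost_Suc_shift sum_distrib_left del: sum.atMost_Suc)
qed (simp add: fa_mult_def)

lemma fa_mult_add_left: "fa_mult (F + F') G = fa_mult F G + fa_mult F' G"
  by (simp add: fa_mult_def fun_eq_iff sum.distrib distrib_right)

lemma fa_mult_fa_word:
  assumes "finite S" and "{v. G v \<noteq> 0} \<subseteq> S"
  shows "fa_mult H G w = (\<Sum>v\<in>S. G v * fa_mult H (fa_word v) w)"
proof -
  have G: "G u = (\<Sum>v\<in>S. G v * fa_word v u)" for u
    using assms by (auto simp: fa_word_def if_distrib sum.delta cong: if_cong)
  have "fa_mult H G w = (\<Sum>i\<le>length w. H (take i w) * (\<Sum>v\<in>S. G v * fa_word v (drop i w)))"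
    unfolding fa_mult_def by (subst G) (rule refl)
  also have "\<dots> = (\<Sum>i\<le>length w. \<Sum>v\<in>S. G v * (H (take i w) * fa_word v (drop i w)))"
    by (simp add: sum_distrib_left mult_ac)
  also have "\<dots> = (\<Sum>v\<in>S. G v * fa_mult H (fa_word v) w)"
    by (subst sum.swap) (simp add: fa_mult_def sum_distrib_left)
  finally show ?thesis .
qed

lemma fa_finsupp_zero [simp]: "fa_finsupp 0"
  by (simp add: fa_finsupp_def)

lemma fa_finsupp_add [simp]:
  "fa_finsupp F \<Longrightarrow> fa_finsupp G \<Longrightarrow> fa_finsupp (F + (G :: 'k::monoid_add fa))"
  unfolding fa_finsupp_def by (rule finite_subset[of _ "{w. F w \<noteq> 0} \<union> {w. G w \<noteq> 0}"]) auto

lemma fa_finsupp_diff [simp]: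
  "fa_finsupp F \<Longrightarrow> fa_finsupp G \<Longrightarrow> fa_finsupp (F - (G :: 'k::ab_group_add fa))"
  unfolding fa_finsupp_def by (rule finite_subset[of _ "{w. F w \<noteq> 0} \<union> {w. G w \<noteq> 0}"]) auto

lemma fa_finsupp_uminus [simp]: "fa_finsupp (- (F :: 'k::ab_group_add fa)) = fa_finsupp F"
  by (simp add: fa_finsupp_def)

lemma fa_finsupp_smult [simp]: "fa_finsupp F \<Longrightarrow> fa_finsupp (fa_smult c (F :: 'k::mult_zero fa))"
  unfolding fa_finsupp_def by (rule finite_subset[of _ "{w. F w \<noteq> 0}"]) auto

lemma fa_finsupp_lmult [simp]: "fa_finsupp F \<Longrightarrow> fa_finsupp (lmult g F)"
proof -
  have "{w. lmult g F w \<noteq> 0} \<subseteq> Cons g ` {w. F w \<noteq> 0}"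
  proof
    fix w assume "w \<in> {w. lmult g F w \<noteq> 0}"
    then show "w \<in> Cons g ` {w. F w \<noteq> 0}" by (cases w) (auto split: if_splits)
  qed
  then show "fa_finsupp F \<Longrightarrow> ?thesis" unfolding fa_finsupp_def by (rule finite_subset) simp
qed

lemma fa_finsupp_lquot [simp]: "fa_finsupp F \<Longrightarrow> fa_finsupp (lquot g F)"
  unfolding fa_finsupp_def using finite_vimageI[of "{w. F w \<noteq> 0}" "Cons g"]
  by (simp add: vimage_def)

lemma fa_finsupp_one [simp]: "fa_finsupp fa_one"
  by (simp add: fa_finsupp_def fa_one_def)

lemma fa_finsupp_word [simp]: "fa_finsupp (fa_word v)"
  by (simp add: fa_finsupp_def fa_word_def)

section \<open>The differential\<close>

lemma fa_mult_d_gen: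
  "fa_mult (d_gen X1) G = lmult X3 (lmult X3 G)"
  "fa_mult (d_gen X2) G = lmult X2 (lmult X2 G)"
  "fa_mult (d_gen X3) G = 0"
  by (simp_all add: fa_gen_eq_lmult fa_mult_lmult) (simp add: fa_zero_def fa_mult_def zero_fun_def)

declare d_gen.simps [simp del] d_word.simps [simp del]

lemma d_word_Nil [simp]: "d_word [] = 0"
  by (simp add: d_word.simps fa_zero_def zero_fun_def)

lemma d_word_Cons: "d_word (x # v) = fa_mult (d_gen x) (fa_word v) - lmult x (d_word v)"
  by (simp add: d_word.simps fa_minus_def lmult_def fun_diff_def)

lemma lmult_neq_zeroE:
  assumes "lmult g F w \<noteq> 0"
  obtains w' where "w = g # w'" and "F w' \<noteq> 0"
  using assms by (cases w) (auto split: if_splits)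

lemma d_word_Cons_neq_zeroE:
  assumes "(d_word (x # v) w :: 'k::comm_ring_1) \<noteq> 0"
  obtains "(fa_mult (d_gen x) (fa_word v) w :: 'k) \<noteq> 0" | "(lmult x (d_word v) w :: 'k) \<noteq> 0"
  using assms by (cases "(lmult x (d_word v) w :: 'k) = 0") (auto simp: d_word_Cons)

lemma length_d_word: "d_word v w \<noteq> 0 \<Longrightarrow> length w = Suc (length v)"
proof (induction v arbitrary: w)
  case (Cons x v)
  from Cons.prems show ?case
  proof (cases rule: d_word_Cons_neq_zeroE)
    case 1
    then show ?thesis
      by (cases x) (auto simp: fa_mult_d_gen fa_word_def elim!: lmult_neq_zeroE split: if_splits)
  next
    case 2
    then show ?thesis by (auto elim!: lmult_neq_zeroE dest!: Cons.IH)
  qed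
qed simp

lemma d_word_eq_zero: "length w \<noteq> Suc (length v) \<Longrightarrow> d_word v w = 0"
  using length_d_word by blast

text \<open>Words with no factor x2 x2 or x3 x3. These squares are d x2 and d x1, so every
  coboundary vanishes on reduced words.\<close>

fun reduced :: "gen list \<Rightarrow> bool" where
  "reduced (x # y # w) \<longleftrightarrow> \<not> (x = y \<and> x \<noteq> X1) \<and> reduced (y # w)"
| "reduced _ \<longleftrightarrow> True"

lemma reduced_Cons: "reduced (x # w) \<Longrightarrow> reduced w"
  by (cases w) auto

lemma not_reduced_d_word: "d_word v w \<noteq> 0 \<Longrightarrow> \<not> reduced w"
proof (induction v arbitrary: w)
  case (Cons x v)
  from Cons.prems show ?case
  proof (cases rule: d_word_Cons_neq_zeroE)
    case 1
    then show ?thesis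
      by (cases x) (auto simp: fa_mult_d_gen fa_word_def elim!: lmult_neq_zeroE split: if_splits)
  next
    case 2
    then show ?thesis by (auto elim!: lmult_neq_zeroE dest!: Cons.IH dest: reduced_Cons)
  qed
qed simp

lemma fa_finsupp_mult_d_gen: "fa_finsupp G \<Longrightarrow> fa_finsupp (fa_mult (d_gen x) G)"
  by (cases x) (simp_all add: fa_mult_d_gen)

lemma fa_finsupp_d_word [simp]: "fa_finsupp (d_word v)"
proof (induction v)
  case (Cons x v)
  then show ?case
    unfolding d_word_Cons
    by (intro fa_finsupp_diff fa_finsupp_mult_d_gen fa_finsupp_lmult fa_finsupp_word)
qed (simp add: fa_finsupp_def)

lemma fa_d_eq_sum:
  assumes "finite S" and "{v. F v \<noteq> 0} \<subseteq> S"
  shows "fa_d F w = (\<Sum>v\<in>S. F v * d_word v w)"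
  unfolding fa_d_def by (rule sum.mono_neutral_left) (use assms in auto)

lemma fa_d_add:
  assumes "fa_finsupp F" and "fa_finsupp G"
  shows "fa_d (F + G) = fa_d F + fa_d G"
proof
  fix w
  let ?S = "{v. F v \<noteq> 0} \<union> {v. G v \<noteq> 0}"
  have S: "finite ?S" using assms by (simp add: fa_finsupp_def)
  have "fa_d (F + G) w = (\<Sum>v\<in>?S. (F + G) v * d_word v w)" by (rule fa_d_eq_sum[OF S]) auto
  moreover have "fa_d F w = (\<Sum>v\<in>?S. F v * d_word v w)" by (rule fa_d_eq_sum[OF S]) auto
  moreover have "fa_d G w = (\<Sum>v\<in>?S. G v * d_word v w)" by (rule fa_d_eq_sum[OF S]) auto
  ultimately show "fa_d (F + G) w = (fa_d F + fa_d G) w" by (simp add: sum.distrib distrib_right)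
qed

lemma fa_d_diff:
  assumes "fa_finsupp F" and "fa_finsupp G"
  shows "fa_d (F - G) = fa_d F - fa_d G"
proof
  fix w
  let ?S = "{v. F v \<noteq> 0} \<union> {v. G v \<noteq> 0}"
  have S: "finite ?S" using assms by (simp add: fa_finsupp_def)
  have "fa_d (F - G) w = (\<Sum>v\<in>?S. (F - G) v * d_word v w)" by (rule fa_d_eq_sum[OF S]) auto
  moreover have "fa_d F w = (\<Sum>v\<in>?S. F v * d_word v w)" by (rule fa_d_eq_sum[OF S]) auto
  moreover have "fa_d G w = (\<Sum>v\<in>?S. G v * d_word v w)" by (rule fa_d_eq_sum[OF S]) auto
  ultimately show "fa_d (F - G) w = (fa_d F - fa_d G) w"
    by (simp add: sum_subtractf left_diff_distrib)
qed

lemma fa_d_smult: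
  assumes "fa_finsupp F"
  shows "fa_d (fa_smult c F) = fa_smult c (fa_d F)"
proof
  fix w
  let ?S = "{v. F v \<noteq> 0}"
  have S: "finite ?S" using assms by (simp add: fa_finsupp_def)
  have "fa_d (fa_smult c F) w = (\<Sum>v\<in>?S. fa_smult c F v * d_word v w)"
    by (rule fa_d_eq_sum[OF S]) auto
  moreover have "fa_d F w = (\<Sum>v\<in>?S. F v * d_word v w)" by (rule fa_d_eq_sum[OF S]) auto
  ultimately show "fa_d (fa_smult c F) w = fa_smult c (fa_d F) w"
    by (simp add: sum_distrib_left mult.assoc)
qed

lemma fa_d_zero [simp]: "fa_d 0 = 0"
  by (simp add: fa_d_def fun_eq_iff)

lemma fa_d_uminus: "fa_finsupp F \<Longrightarrow> fa_d (- F) = - fa_d F"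
  using fa_d_diff[of 0 F] by simp

lemma fa_finsupp_fa_d [simp]:
  fixes F :: "'k::comm_ring_1 fa"
  assumes "fa_finsupp F"
  shows "fa_finsupp (fa_d F)"
proof -
  let ?S = "{v. F v \<noteq> 0}"
  have "{w. fa_d F w \<noteq> 0} \<subseteq> (\<Union>v\<in>?S. {w. (d_word v w :: 'k) \<noteq> 0})"
  proof
    fix w assume "w \<in> {w. fa_d F w \<noteq> 0}"
    then have "(\<Sum>v\<in>?S. F v * d_word v w) \<noteq> 0" by (simp add: fa_d_def)
    then obtain v where "v \<in> ?S" "F v * d_word v w \<noteq> 0"
      by (meson sum.not_neutral_contains_not_neutral)
    then show "w \<in> (\<Union>v\<in>?S. {w. (d_word v w :: 'k) \<noteq> 0})" by auto
  qed
  moreover have "finite (\<Union>v\<in>?S. {w. (d_word v w :: 'k) \<noteq> 0})"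
    using assms fa_finsupp_d_word unfolding fa_finsupp_def by blast
  ultimately show ?thesis unfolding fa_finsupp_def by (rule finite_subset)
qed

lemma fa_d_lmult:
  assumes "fa_finsupp G"
  shows "fa_d (lmult g G) = fa_mult (d_gen g) G - lmult g (fa_d G)"
proof
  fix w
  let ?S = "{v. G v \<noteq> 0}"
  have S: "finite ?S" using assms by (simp add: fa_finsupp_def)
  have "fa_d (lmult g G) w = (\<Sum>v\<in>Cons g ` ?S. lmult g G v * d_word v w)"
    by (rule fa_d_eq_sum) (use S in \<open>auto elim!: lmult_neq_zeroE\<close>)
  also have "\<dots> = (\<Sum>v\<in>?S. G v * fa_mult (d_gen g) (fa_word v) w - G v * lmult g (d_word v) w)"
    by (simp add: sum.reindex d_word_Cons right_diff_distrib)
  also have "\<dots> = fa_mult (d_gen g) G w - lmult g (fa_d G) w"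
    unfolding sum_subtractf fa_mult_fa_word[OF S, of G, simplified]
    by (cases w) (simp_all add: fa_d_eq_sum[OF S])
  finally show "fa_d (lmult g G) w = (fa_mult (d_gen g) G - lmult g (fa_d G)) w" by simp
qed

lemma fa_d_lmult_gen:
  assumes "fa_finsupp G"
  shows "fa_d (lmult X1 G) = lmult X3 (lmult X3 G) - lmult X1 (fa_d G)"
    and "fa_d (lmult X2 G) = lmult X2 (lmult X2 G) - lmult X2 (fa_d G)"
    and "fa_d (lmult X3 G) = - lmult X3 (fa_d G)"
  using assms by (simp_all add: fa_d_lmult fa_mult_d_gen)

lemma fa_d_one [simp]: "fa_d fa_one = 0"
proof
  fix w show "fa_d fa_one w = 0 w"
    by (subst fa_d_eq_sum[of "{[]}"]) (auto simp: fa_one_def)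
qed

lemma fa_d_decompose:
  assumes "fa_finsupp F"
  shows "fa_d F = lmult X3 (lmult X3 (lquot X1 F)) - lmult X1 (fa_d (lquot X1 F))
    + (lmult X2 (lmult X2 (lquot X2 F)) - lmult X2 (fa_d (lquot X2 F)))
    - lmult X3 (fa_d (lquot X3 F))"
proof -
  have "fa_d F = fa_d (fa_smult (F []) fa_one + lmult X1 (lquot X1 F) + lmult X2 (lquot X2 F)
      + lmult X3 (lquot X3 F))"
    by (subst fa_decompose) (rule refl)
  also have "\<dots> = fa_d (fa_smult (F []) fa_one) + fa_d (lmult X1 (lquot X1 F))
      + fa_d (lmult X2 (lquot X2 F)) + fa_d (lmult X3 (lquot X3 F))"
    using assms by (simp add: fa_d_add)
  finally show ?thesis using assms by (simp add: fa_d_smult fa_d_lmult_gen)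
qed

lemma fa_d_Nil: "fa_finsupp F \<Longrightarrow> fa_d F [] = 0"
  by (subst fa_d_decompose) simp_all

lemma lquot_fa_d:
  assumes "fa_finsupp F"
  shows "lquot X1 (fa_d F) = - fa_d (lquot X1 F)"
    and "lquot X2 (fa_d F) = lmult X2 (lquot X2 F) - fa_d (lquot X2 F)"
    and "lquot X3 (fa_d F) = lmult X3 (lquot X1 F) - fa_d (lquot X3 F)"
  by (subst fa_d_decompose[OF assms], simp add: fun_eq_iff)+

definition homogeneous :: "nat \<Rightarrow> 'k::zero fa \<Rightarrow> bool" where
  "homogeneous n F \<longleftrightarrow> (\<forall>w. F w \<noteq> 0 \<longrightarrow> length w = n)"

definition component :: "nat \<Rightarrow> 'k::zero fa \<Rightarrow> 'k fa" where
  "component n F = (\<lambda>w. if length w = n then F w else 0)"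

lemma homogeneous_add:
  "homogeneous n F \<Longrightarrow> homogeneous n G \<Longrightarrow> homogeneous n (F + (G :: 'k::monoid_add fa))"
  unfolding homogeneous_def by (metis add_0 plus_fun_apply)

lemma homogeneous_diff:
  "homogeneous n F \<Longrightarrow> homogeneous n G \<Longrightarrow> homogeneous n (F - (G :: 'k::group_add fa))"
  unfolding homogeneous_def by (metis diff_self minus_apply)

lemma homogeneous_smult: "homogeneous n F \<Longrightarrow> homogeneous n (fa_smult c (F :: 'k::mult_zero fa))"
  unfolding homogeneous_def by (metis fa_smult_apply mult_zero_right)

lemma homogeneous_lmult: "homogeneous n F \<Longrightarrow> homogeneous (Suc n) (lmult g F)"
  unfolding homogeneous_def by (auto elim!: lmult_neq_zeroE)

lemma homogeneous_lquot: "homogeneous (Suc n) F \<Longrightarrow> homogeneous n (lquot g F)"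
  unfolding homogeneous_def by auto

lemma homogeneous_one: "homogeneous 0 fa_one"
  unfolding homogeneous_def fa_one_def by auto

lemma homogeneous_eq_zero: "homogeneous n F \<Longrightarrow> length w \<noteq> n \<Longrightarrow> F w = 0"
  unfolding homogeneous_def by auto

lemma homogeneous_component: "homogeneous n (component n F)"
  unfolding homogeneous_def component_def by auto

lemma component_eq_self: "homogeneous n F \<Longrightarrow> component n F = F"
  unfolding homogeneous_def component_def by (auto simp: fun_eq_iff)

lemma fa_finsupp_component [simp]: "fa_finsupp F \<Longrightarrow> fa_finsupp (component n F)"
  unfolding fa_finsupp_def component_def by (rule finite_subset[of _ "{w. F w \<noteq> 0}"]) auto

lemma component_zero [simp]: "component n 0 = 0"
  by (simp add: component_def fun_eq_iff)

lemma component_add: "component n (F + G) = component n F + component n (G :: 'k::monoid_add fa)"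
  by (simp add: component_def fun_eq_iff)

lemma component_diff: "component n (F - G) = component n F - component n (G :: 'k::group_add fa)"
  by (simp add: component_def fun_eq_iff)

lemma component_lmult: "component (Suc n) (lmult g F) = lmult g (component n F)"
  by (rule fa_eqI) (simp_all add: component_def)

lemma fa_d_component:
  assumes "fa_finsupp F"
  shows "fa_d (component n F) = component (Suc n) (fa_d F)"
proof
  fix w
  let ?S = "{v. F v \<noteq> 0}"
  have S: "finite ?S" using assms by (simp add: fa_finsupp_def)
  have "fa_d (component n F) w = (\<Sum>v\<in>?S. component n F v * d_word v w)"
    by (rule fa_d_eq_sum[OF S]) (auto simp: component_def)
  also have "\<dots> = (\<Sum>v\<in>?S. if length w = Suc n then F v * d_word v w else 0)"
    by (rule sum.cong) (auto simp: component_def d_word_eq_zero)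
  also have "\<dots> = component (Suc n) (fa_d F) w"
    by (simp add: component_def fa_d_def)
  finally show "fa_d (component n F) w = component (Suc n) (fa_d F) w" .
qed

lemma sum_components:
  assumes "fa_finsupp F"
  shows "F = (\<lambda>w. \<Sum>n\<in>length ` {w. F w \<noteq> 0}. component n F w)"
proof
  fix w
  have "finite (length ` {w. F w \<noteq> 0})" using assms by (simp add: fa_finsupp_def)
  then show "F w = (\<Sum>n\<in>length ` {w. F w \<noteq> 0}. component n F w)"
    by (cases "F w = 0") (auto simp: component_def sum.delta' intro!: sum.neutral[symmetric])
qed

lemma cocycles_iff: "F \<in> cocycles \<longleftrightarrow> fa_finsupp F \<and> fa_d F = 0"
  by (simp add: cocycles_def fa_zero_def zero_fun_def)

lemma fa_one_in_cocycles: "fa_one \<in> cocycles"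
  by (simp add: cocycles_iff)

lemma lmult_X3_in_cocycles: "F \<in> cocycles \<Longrightarrow> lmult X3 F \<in> cocycles"
  by (simp add: cocycles_iff fa_d_lmult_gen)

lemma fa_d_in_coboundaries: "fa_finsupp e \<Longrightarrow> fa_d e \<in> coboundaries"
  by (auto simp: coboundaries_def)

lemma coboundariesE:
  assumes "F \<in> coboundaries"
  obtains e where "fa_finsupp e" and "F = fa_d e"
  using assms by (auto simp: coboundaries_def)

lemma zero_in_coboundaries [simp]: "0 \<in> coboundaries"
  using fa_d_in_coboundaries[OF fa_finsupp_zero] by simp

lemma coboundaries_add: "F \<in> coboundaries \<Longrightarrow> G \<in> coboundaries \<Longrightarrow> F + G \<in> coboundaries"
  by (auto elim!: coboundariesE simp: fa_d_add[symmetric] intro!: fa_d_in_coboundaries)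

lemma coboundaries_diff: "F \<in> coboundaries \<Longrightarrow> G \<in> coboundaries \<Longrightarrow> F - G \<in> coboundaries"
  by (auto elim!: coboundariesE simp: fa_d_diff[symmetric] intro!: fa_d_in_coboundaries)

lemma coboundaries_smult: "F \<in> coboundaries \<Longrightarrow> fa_smult c F \<in> coboundaries"
  by (auto elim!: coboundariesE simp: fa_d_smult[symmetric] intro!: fa_d_in_coboundaries)

lemma coboundaries_sum:
  "finite I \<Longrightarrow> (\<And>i. i \<in> I \<Longrightarrow> F i \<in> coboundaries) \<Longrightarrow> (\<lambda>w. \<Sum>i\<in>I. F i w) \<in> coboundaries"
proof (induction I rule: finite_induct)
  case (insert i I)
  then have "F i + (\<lambda>w. \<Sum>i\<in>I. F i w) \<in> coboundaries" by (intro coboundaries_add) auto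
  with insert show ?case by (simp add: plus_fun_def)
qed (simp add: zero_fun_def[symmetric])

lemma coboundaries_lmult_X3: "F \<in> coboundaries \<Longrightarrow> lmult X3 F \<in> coboundaries"
proof (elim coboundariesE)
  fix e assume "fa_finsupp e" and "F = fa_d e"
  then have "lmult X3 F = fa_d (- lmult X3 e)"
    by (simp add: fa_d_uminus fa_d_lmult_gen lmult_uminus)
  with \<open>fa_finsupp e\<close> show ?thesis by (simp add: fa_d_in_coboundaries)
qed

lemma coboundaries_component: "F \<in> coboundaries \<Longrightarrow> component n F \<in> coboundaries"
proof (elim coboundariesE)
  fix e assume e: "fa_finsupp e" and F: "F = fa_d e"
  show ?thesis
  proof (cases n)
    case 0
    then have "component n F = 0" using fa_d_Nil[OF e] by (auto simp: F component_def)
    then show ?thesis by simp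
  next
    case (Suc k)
    then show ?thesis using e by (simp add: F fa_d_component[symmetric] fa_d_in_coboundaries)
  qed
qed

lemma coboundary_vanishes_reduced:
  fixes F :: "'k::comm_ring_1 fa"
  assumes "F \<in> coboundaries" and "reduced w"
  shows "F w = 0"
proof -
  have "(d_word v w :: 'k) = 0" for v using assms(2) not_reduced_d_word by blast
  with assms(1) show ?thesis by (auto elim!: coboundariesE simp: fa_d_def)
qed

lemma lmult_X2_in_coboundaries:
  assumes "fa_finsupp c" and "fa_d c = lmult X2 c"
  shows "lmult X2 c \<in> coboundaries"
proof -
  have "c = lmult X2 (lquot X2 c) - fa_d (lquot X2 c)"
    using lquot_fa_d(2)[OF assms(1)] by (simp add: assms(2))
  then have "lmult X2 c = fa_d (lmult X2 (lquot X2 c))"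
    using assms(1) by (metis fa_d_lmult_gen(2) fa_finsupp_lquot lmult_diff)
  then show ?thesis using assms(1) by (simp add: fa_d_in_coboundaries)
qed

section \<open>Monomials in the classes of x3 and x1 x3 + x3 x1\<close>

lemma fa_mult_cls_c: "fa_mult cls_c G = lmult X3 G"
  by (simp add: cls_c_def lmult_def)

lemma cls_u_eq: "cls_u = lmult X1 (lmult X3 fa_one) + lmult X3 (lmult X1 fa_one)"
  by (simp add: cls_u_def fa_add_def plus_fun_def fa_gen_eq_lmult fa_mult_lmult)

lemma fa_mult_cls_u: "fa_mult cls_u G = lmult X1 (lmult X3 G) + lmult X3 (lmult X1 G)"
  by (simp add: cls_u_eq fa_mult_add_left fa_mult_lmult)

lemma fa_pow_0 [simp]: "fa_pow F 0 = fa_one"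
  and fa_pow_Suc [simp]: "fa_pow F (Suc m) = fa_mult F (fa_pow F m)"
  by (simp_all add: fa_pow_def)

lemma fa_finsupp_mult_cls_u [simp]: "fa_finsupp G \<Longrightarrow> fa_finsupp (fa_mult cls_u G)"
  by (simp add: fa_mult_cls_u)

lemma homogeneous_mult_cls_u: "homogeneous n G \<Longrightarrow> homogeneous (Suc (Suc n)) (fa_mult cls_u G)"
  by (simp add: fa_mult_cls_u homogeneous_add homogeneous_lmult)

lemma fa_d_mult_cls_u:
  assumes "fa_finsupp G"
  shows "fa_d (fa_mult cls_u G) = fa_mult cls_u (fa_d G)"
  using assms by (simp add: fa_mult_cls_u fa_d_add fa_d_lmult_gen lmult_diff lmult_uminus)

definition cls_monom :: "nat \<Rightarrow> nat \<Rightarrow> 'k::comm_ring_1 fa" where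
  "cls_monom i j = fa_mult (fa_pow cls_c i) (fa_pow cls_u j)"

lemma cls_monom_0: "cls_monom 0 j = fa_pow cls_u j"
  by (simp add: cls_monom_def)

lemma cls_monom_Suc: "cls_monom (Suc i) j = lmult X3 (cls_monom i j)"
  by (simp add: cls_monom_def fa_mult_cls_c fa_mult_lmult)

lemma mult_cls_u_in_cocycles: "G \<in> cocycles \<Longrightarrow> fa_mult cls_u G \<in> cocycles"
  by (simp add: cocycles_iff fa_d_mult_cls_u)

lemma cls_monom_in_cocycles: "cls_monom i j \<in> cocycles"
proof (induction i)
  case 0
  have "fa_pow cls_u j \<in> cocycles"
    by (induction j) (simp_all add: fa_one_in_cocycles mult_cls_u_in_cocycles)
  then show ?case by (simp add: cls_monom_0)
qed (simp add: cls_monom_Suc lmult_X3_in_cocycles)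

lemma fa_finsupp_cls_monom [simp]: "fa_finsupp (cls_monom i j)"
  using cls_monom_in_cocycles cocycles_iff by blast

lemma fa_d_cls_monom [simp]: "fa_d (cls_monom i j) = 0"
  using cls_monom_in_cocycles cocycles_iff by blast

lemma homogeneous_cls_monom: "homogeneous (i + 2 * j) (cls_monom i j)"
proof (induction i)
  case 0
  have "homogeneous (2 * j) (fa_pow cls_u j)"
    by (induction j) (simp_all add: homogeneous_one homogeneous_mult_cls_u)
  then show ?case by (simp add: cls_monom_0)
qed (simp add: cls_monom_Suc homogeneous_lmult)

lemma cls_c_in_cocycles: "cls_c \<in> cocycles"
  using cls_monom_in_cocycles[of 1 0]
  by (simp add: cls_monom_Suc cls_monom_0 cls_c_def fa_gen_eq_lmult)

lemma cls_u_in_cocycles: "cls_u \<in> cocycles"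
proof -
  have "fa_mult cls_u fa_one = cls_u"
    unfolding fa_mult_cls_u by (simp add: cls_u_eq)
  then have "cls_monom 0 (Suc 0) = cls_u" by (simp add: cls_monom_0)
  then show ?thesis using cls_monom_in_cocycles by metis
qed

lemma cls_monom_in_coboundaries:
  assumes "2 \<le> i"
  shows "cls_monom i j \<in> coboundaries"
proof -
  obtain k where "i = Suc (Suc k)" using assms by (metis add_2_eq_Suc le_Suc_ex)
  then have "cls_monom i j = fa_d (lmult X1 (cls_monom k j))"
    by (simp add: cls_monom_Suc fa_d_lmult_gen)
  then show ?thesis by (metis fa_d_in_coboundaries fa_finsupp_cls_monom fa_finsupp_lmult)
qed

definition x13_power :: "nat \<Rightarrow> gen list" where
  "x13_power k = concat (replicate k [X1, X3])"

lemma x13_power_0 [simp]: "x13_power 0 = []"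
  and x13_power_Suc [simp]: "x13_power (Suc k) = X1 # X3 # x13_power k"
  by (simp_all add: x13_power_def)

lemma reduced_x13_power: "reduced (x13_power k)" "reduced (X3 # x13_power k)"
  by (induction k) auto

lemma fa_pow_cls_u_x13_power: "fa_pow cls_u j (x13_power k) = (if j = k then 1 else 0)"
proof (induction j arbitrary: k)
  case 0
  then show ?case by (cases k) simp_all
next
  case (Suc j)
  then show ?case by (cases k) (simp_all add: fa_mult_cls_u)
qed

lemma fa_pow_cls_u_X3_x13_power: "fa_pow cls_u j (X3 # x13_power k) = 0"
proof (induction j arbitrary: k)
  case (Suc j)
  then show ?case by (cases k) (simp_all add: fa_mult_cls_u)
qed simp

lemma lmult_X3_x13_power: "lmult X3 F (x13_power k) = 0"
  by (cases k) simp_all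

lemma cls_monom_x13_power: "cls_monom i j (x13_power k) = (if i = 0 \<and> j = k then 1 else 0)"
  by (cases i) (simp_all add: cls_monom_0 cls_monom_Suc fa_pow_cls_u_x13_power lmult_X3_x13_power)

lemma cls_monom_X3_x13_power: "cls_monom i j (X3 # x13_power k) = (if i = 1 \<and> j = k then 1 else 0)"
  by (cases i)
    (simp_all add: cls_monom_0 cls_monom_Suc fa_pow_cls_u_X3_x13_power cls_monom_x13_power)

section \<open>Homogeneous cocycles\<close>

definition cocycle_rep :: "nat \<Rightarrow> 'k::comm_ring_1 fa" where
  "cocycle_rep n = cls_monom (n mod 2) (n div 2)"

lemma homogeneous_cocycle_rep: "homogeneous n (cocycle_rep n)"
  using homogeneous_cls_monom[of "n mod 2" "n div 2"] by (simp add: cocycle_rep_def)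

lemma cocycle_lquot:
  assumes "z \<in> cocycles"
  shows "lquot X1 z \<in> cocycles"
    and "lmult X2 (lquot X2 z) \<in> coboundaries"
    and "fa_d (lquot X3 z) = lmult X3 (lquot X1 z)"
proof -
  have z: "fa_finsupp z" "fa_d z = 0" using assms by (simp_all add: cocycles_iff)
  show "lquot X1 z \<in> cocycles"
    using lquot_fa_d(1)[OF z(1)] z by (simp add: cocycles_iff fun_eq_iff)
  have "fa_d (lquot X2 z) = lmult X2 (lquot X2 z)"
    using lquot_fa_d(2)[OF z(1)] z by (simp add: fun_eq_iff)
  then show "lmult X2 (lquot X2 z) \<in> coboundaries"
    using z by (simp add: lmult_X2_in_coboundaries)
  show "fa_d (lquot X3 z) = lmult X3 (lquot X1 z)"
    using lquot_fa_d(3)[OF z(1)] z by (simp add: fun_eq_iff)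
qed

lemma cocycle_normal_form:
  assumes z: "z \<in> cocycles" "homogeneous (Suc n) z"
    and r: "homogeneous n r" "lquot X1 z - r \<in> coboundaries"
  shows "\<exists>a. fa_finsupp a \<and> homogeneous n a \<and> fa_d a = lmult X3 r
    \<and> z - (lmult X1 r + lmult X3 a) \<in> coboundaries"
proof -
  define b c a3 where "b = lquot X1 z" and "c = lquot X2 z" and "a3 = lquot X3 z"
  have fz: "fa_finsupp z" using z(1) by (simp add: cocycles_iff)
  obtain e where e: "fa_finsupp e" "b - r = fa_d e" using r(2) b_def by (auto elim: coboundariesE)
  have "r = b - fa_d e" using e(2)[symmetric] by simp
  then have fr: "fa_finsupp r" using e fz by (simp add: b_def)
  define a0 where "a0 = a3 + lmult X3 e"
  define a where "a = component n a0"
  have "z [] = 0" using homogeneous_eq_zero[OF z(2)] by simp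
  then have "z = lmult X1 b + lmult X2 c + lmult X3 a3"
    using fa_decompose[of z] by (simp add: b_def c_def a3_def)
  moreover have "lmult X1 (fa_d e) = lmult X3 (lmult X3 e) - fa_d (lmult X1 e)"
    using e by (simp add: fa_d_lmult_gen)
  ultimately have "z - (lmult X1 r + lmult X3 a0) = lmult X2 c - fa_d (lmult X1 e)"
    by (simp add: a0_def \<open>r = b - fa_d e\<close> lmult_add lmult_diff)
  also have "\<dots> \<in> coboundaries"
    using cocycle_lquot(2)[OF z(1)] e
    by (intro coboundaries_diff fa_d_in_coboundaries) (simp_all add: c_def)
  finally have "component (Suc n) (z - (lmult X1 r + lmult X3 a0)) \<in> coboundaries"
    by (rule coboundaries_component)
  then have "z - (lmult X1 r + lmult X3 a) \<in> coboundaries"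
    using z(2) r(1) by (simp add: a_def component_diff component_add component_lmult
        component_eq_self homogeneous_lmult)
  moreover have "fa_d a = lmult X3 r"
  proof -
    have "fa_d a0 = lmult X3 (b - fa_d e)"
      using fz e cocycle_lquot(3)[OF z(1)]
      by (simp add: a0_def a3_def b_def fa_d_add fa_d_lmult_gen lmult_diff)
    then show ?thesis using fz e r(1) \<open>r = b - fa_d e\<close>
      by (simp add: a_def a0_def a3_def fa_d_component component_lmult component_eq_self)
  qed
  moreover have "fa_finsupp a" "homogeneous n a"
    using fz e by (simp_all add: a_def a0_def a3_def homogeneous_component)
  ultimately show ?thesis by blast
qed

lemma cocycle_rep_even: "cocycle_rep (2 * m) = fa_pow cls_u m"
  by (simp add: cocycle_rep_def cls_monom_0)

lemma cocycle_rep_odd: "cocycle_rep (Suc (2 * m)) = lmult X3 (fa_pow cls_u m)"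
  by (simp add: cocycle_rep_def cls_monom_Suc cls_monom_0)

lemma homogeneous_cocycle_step_even:
  fixes z :: "'k::comm_ring_1 fa"
  assumes IH: "\<And>a :: 'k fa. a \<in> cocycles \<Longrightarrow> homogeneous (2 * m) a
      \<Longrightarrow> \<exists>\<mu>. a - fa_smult \<mu> (cocycle_rep (2 * m)) \<in> coboundaries"
    and z: "z \<in> cocycles" "homogeneous (Suc (2 * m)) z"
    and l: "lquot X1 z - fa_smult l (cocycle_rep (2 * m)) \<in> coboundaries"
  shows "\<exists>\<mu>. z - fa_smult \<mu> (cocycle_rep (Suc (2 * m))) \<in> coboundaries"
proof -
  obtain a where a: "fa_finsupp a" "homogeneous (2 * m) a"
    "fa_d a = lmult X3 (fa_smult l (cocycle_rep (2 * m)))"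
    "z - (lmult X1 (fa_smult l (cocycle_rep (2 * m))) + lmult X3 a) \<in> coboundaries"
    using cocycle_normal_form[OF z homogeneous_smult[OF homogeneous_cocycle_rep] l] by blast
  have "fa_smult l (cocycle_rep (Suc (2 * m)) :: 'k fa) \<in> coboundaries"
    using a(1,3) fa_d_in_coboundaries
    by (fastforce simp: cocycle_rep_even cocycle_rep_odd lmult_smult)
  then have "fa_smult l (cocycle_rep (Suc (2 * m))) (X3 # x13_power m) = (0 :: 'k)"
    by (rule coboundary_vanishes_reduced[OF _ reduced_x13_power(2)])
  then have "l = 0" by (simp add: cocycle_rep_def cls_monom_X3_x13_power)
  with a have "a \<in> cocycles" by (simp add: cocycles_iff)
  then obtain \<mu> where "a - fa_smult \<mu> (cocycle_rep (2 * m)) \<in> coboundaries"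
    using IH a(2) by blast
  then have "(z - lmult X3 a) + lmult X3 (a - fa_smult \<mu> (cocycle_rep (2 * m))) \<in> coboundaries"
    using a(4) \<open>l = 0\<close> by (intro coboundaries_add coboundaries_lmult_X3) simp_all
  then show ?thesis
    by (auto simp: lmult_diff lmult_smult cocycle_rep_even cocycle_rep_odd)
qed

lemma homogeneous_cocycle_step_odd:
  fixes z :: "'k::comm_ring_1 fa"
  assumes IH: "\<And>a :: 'k fa. a \<in> cocycles \<Longrightarrow> homogeneous (Suc (2 * m)) a
      \<Longrightarrow> \<exists>\<mu>. a - fa_smult \<mu> (cocycle_rep (Suc (2 * m))) \<in> coboundaries"
    and z: "z \<in> cocycles" "homogeneous (Suc (Suc (2 * m))) z"
    and l: "lquot X1 z - fa_smult l (cocycle_rep (Suc (2 * m))) \<in> coboundaries"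
  shows "\<exists>\<mu>. z - fa_smult \<mu> (cocycle_rep (Suc (Suc (2 * m)))) \<in> coboundaries"
proof -
  define U :: "'k fa" where "U = fa_pow cls_u m"
  have U: "U \<in> cocycles" "homogeneous (2 * m) U"
    using cls_monom_in_cocycles[of 0 m] homogeneous_cls_monom[of 0 m]
    by (simp_all add: U_def cls_monom_0)
  obtain a where a: "fa_finsupp a" "homogeneous (Suc (2 * m)) a"
    "fa_d a = lmult X3 (fa_smult l (lmult X3 U))"
    "z - (lmult X1 (fa_smult l (lmult X3 U)) + lmult X3 a) \<in> coboundaries"
    using cocycle_normal_form[OF z homogeneous_smult[OF homogeneous_cocycle_rep] l]
    by (auto simp: cocycle_rep_odd U_def)
  define a' where "a' = a - fa_smult l (lmult X1 U)"
  have "a' \<in> cocycles"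
    using a U by (simp add: a'_def cocycles_iff fa_d_diff fa_d_smult fa_d_lmult_gen lmult_smult)
  moreover have "homogeneous (Suc (2 * m)) a'"
    using a(2) U(2) by (simp add: a'_def homogeneous_diff homogeneous_smult homogeneous_lmult)
  ultimately obtain \<mu> where \<mu>: "a' - fa_smult \<mu> (lmult X3 U) \<in> coboundaries"
    using IH by (fastforce simp: cocycle_rep_odd U_def)
  have "lmult X3 (lmult X3 U) \<in> coboundaries"
    using cls_monom_in_coboundaries[of 2 m]
    by (simp add: numeral_2_eq_2 cls_monom_Suc cls_monom_0 U_def)
  have "cocycle_rep (Suc (Suc (2 * m))) = lmult X1 (lmult X3 U) + lmult X3 (lmult X1 U)"
    using cocycle_rep_even[of "Suc m"] by (simp add: U_def fa_mult_cls_u)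
  then have "z - fa_smult l (cocycle_rep (Suc (Suc (2 * m))))
      = (z - (lmult X1 (fa_smult l (lmult X3 U)) + lmult X3 a))
        + lmult X3 (a' - fa_smult \<mu> (lmult X3 U)) + fa_smult \<mu> (lmult X3 (lmult X3 U))"
    by (simp add: a'_def lmult_diff lmult_add lmult_smult fa_smult_add algebra_simps)
  also have "\<dots> \<in> coboundaries"
    by (intro coboundaries_add[OF coboundaries_add] a(4) coboundaries_lmult_X3[OF \<mu>]
        coboundaries_smult \<open>lmult X3 (lmult X3 U) \<in> coboundaries\<close>)
  finally show ?thesis by blast
qed

lemma homogeneous_cocycle_cohomologous_rep:
  fixes z :: "'k::comm_ring_1 fa"
  shows "z \<in> cocycles \<Longrightarrow> homogeneous n z \<Longrightarrow> \<exists>l. z - fa_smult l (cocycle_rep n) \<in> coboundaries"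
proof (induction n arbitrary: z)
  case 0
  have "z - fa_smult (z []) (cocycle_rep 0) = 0"
  proof (rule fa_eqI)
    fix g w show "(z - fa_smult (z []) (cocycle_rep 0)) (g # w) = 0 (g # w)"
      using homogeneous_eq_zero[OF "0.prems"(2)] by (simp add: cocycle_rep_def cls_monom_0)
  qed (simp add: cocycle_rep_def cls_monom_0)
  then have "z - fa_smult (z []) (cocycle_rep 0) \<in> coboundaries" by simp
  then show ?case by blast
next
  case (Suc n)
  obtain l where l: "lquot X1 z - fa_smult l (cocycle_rep n) \<in> coboundaries"
    using Suc.IH[OF cocycle_lquot(1)[OF Suc.prems(1)] homogeneous_lquot[OF Suc.prems(2)]] ..
  show ?case
  proof (cases "even n")
    case True
    then obtain m where n: "n = 2 * m" ..
    show ?thesis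
      using homogeneous_cocycle_step_even[OF Suc.IH[unfolded n] Suc.prems[unfolded n] l[unfolded n]]
      unfolding n .
  next
    case False
    then obtain m where "n = 2 * m + 1" ..
    then have n: "n = Suc (2 * m)" by simp
    show ?thesis
      using homogeneous_cocycle_step_odd[OF Suc.IH[unfolded n] Suc.prems[unfolded n] l[unfolded n]]
      unfolding n .
  qed
qed

section \<open>The evaluation map\<close>

lemma inner_degree_bound: "\<exists>B. \<forall>i. degree (coeff p i) \<le> B"
proof
  let ?B = "Max ((\<lambda>i. degree (coeff p i)) ` {..degree p})"
  show "\<forall>i. degree (coeff p i) \<le> ?B"
    by (metis Max_ge atMost_iff coeff_eq_0 degree_0 finite_atMost finite_imageI imageI le0
        not_le_imp_less)
qed

lemma ev_rep_eq_sum: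
  assumes "degree p \<le> A" and "\<And>i. degree (coeff p i) \<le> B"
  shows "ev_rep p = (\<lambda>w. \<Sum>i\<le>A. \<Sum>j\<le>B. coeff (coeff p i) j * cls_monom i j w)"
proof
  fix w
  have "ev_rep p w = (\<Sum>i\<le>degree p. \<Sum>j\<le>B. coeff (coeff p i) j * cls_monom i j w)"
    unfolding ev_rep_def cls_monom_def[symmetric]
    by (intro sum.cong refl sum.mono_neutral_left)
      (use assms(2) in \<open>auto simp: coeff_eq_0 le_trans\<close>)
  also have "\<dots> = (\<Sum>i\<le>A. \<Sum>j\<le>B. coeff (coeff p i) j * cls_monom i j w)"
    by (rule sum.mono_neutral_left) (use assms(1) in \<open>auto simp: coeff_eq_0\<close>)
  finally show "ev_rep p w = (\<Sum>i\<le>A. \<Sum>j\<le>B. coeff (coeff p i) j * cls_monom i j w)" .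
qed

lemma ev_rep_add: "ev_rep (p + q) = ev_rep p + ev_rep q"
proof -
  obtain Bp Bq where "\<And>i. degree (coeff p i) \<le> Bp" "\<And>i. degree (coeff q i) \<le> Bq"
    using inner_degree_bound by metis
  then have B: "\<And>i. degree (coeff p i) \<le> Bp + Bq" "\<And>i. degree (coeff q i) \<le> Bp + Bq"
      "\<And>i. degree (coeff (p + q) i) \<le> Bp + Bq"
    by (auto intro: le_trans[OF degree_add_le] trans_le_add1 trans_le_add2)
  let ?A = "max (degree p) (degree q)"
  show ?thesis
    using ev_rep_eq_sum[of "p + q" ?A, OF _ B(3)] ev_rep_eq_sum[of p ?A, OF _ B(1)]
      ev_rep_eq_sum[of q ?A, OF _ B(2)]
    by (simp add: degree_add_le fun_eq_iff sum.distrib distrib_right)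
qed

lemma sum_sum_delta:
  fixes f :: "'a \<Rightarrow> 'b \<Rightarrow> 'c::semiring_1"
  assumes "finite A" and "finite B"
  shows "(\<Sum>i\<in>A. \<Sum>j\<in>B. f i j * (if i = a \<and> j = b then 1 else 0))
    = (if a \<in> A \<and> b \<in> B then f a b else 0)"
proof -
  have "(\<Sum>i\<in>A. \<Sum>j\<in>B. f i j * (if i = a \<and> j = b then 1 else 0))
      = (\<Sum>i\<in>A. if i = a then (\<Sum>j\<in>B. if j = b then f a b else 0) else 0)"
    by (auto intro!: sum.cong)
  with assms show ?thesis by (simp add: sum.delta)
qed

lemma ev_rep_zero: "ev_rep 0 = 0"
  by (simp add: ev_rep_def fun_eq_iff)

lemma ev_rep_sum: "finite L \<Longrightarrow> ev_rep (\<Sum>n\<in>L. P n) w = (\<Sum>n\<in>L. ev_rep (P n) w)"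
  by (induction L rule: finite_induct) (simp_all add: ev_rep_add ev_rep_zero)

lemma ev_rep_monom: "ev_rep (monom (monom c j) i) = fa_smult c (cls_monom i j)"
proof
  fix w
  have "ev_rep (monom (monom c j) i) w
      = (\<Sum>i'\<le>i. \<Sum>j'\<le>j. (c * cls_monom i' j' w) * (if i' = i \<and> j' = j then 1 else 0))"
    by (subst ev_rep_eq_sum[of _ i j]) (auto simp: coeff_monom degree_monom_le intro!: sum.cong)
  then show "ev_rep (monom (monom c j) i) w = fa_smult c (cls_monom i j) w"
    by (simp add: sum_sum_delta)
qed

lemma ev_rep_x13_power:
  "ev_rep p (x13_power k) = coeff (coeff p 0) k"
  "ev_rep p (X3 # x13_power k) = coeff (coeff p 1) k"
proof -
  obtain B where B: "\<And>i. degree (coeff p i) \<le> B" using inner_degree_bound by metis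
  then have B': "\<And>i. degree (coeff p i) \<le> max B k" by (meson le_trans max.cobounded1)
  show "ev_rep p (x13_power k) = coeff (coeff p 0) k"
    by (subst ev_rep_eq_sum[of _ "max 1 (degree p)", OF _ B'])
      (simp_all add: cls_monom_x13_power sum_sum_delta)
  show "ev_rep p (X3 # x13_power k) = coeff (coeff p 1) k"
    by (subst ev_rep_eq_sum[of _ "max 1 (degree p)", OF _ B'])
      (simp_all add: cls_monom_X3_x13_power sum_sum_delta)
qed

lemma x_squared_dvd_iff: "[:0, 0, 1:] dvd p \<longleftrightarrow> coeff p 0 = 0 \<and> coeff p 1 = 0"
proof -
  have "[:0, 0, 1:] = (monom 1 2 :: 'a::comm_semiring_1 poly)"
    by (simp add: monom_Suc numeral_2_eq_2 monom_0)
  then show ?thesis using monom_1_dvd_iff'[of 2 p] by (auto simp: less_2_cases_iff)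
qed

lemma ev_rep_in_coboundaries_iff: "ev_rep p \<in> coboundaries \<longleftrightarrow> coeff p 0 = 0 \<and> coeff p 1 = 0"
proof
  assume "ev_rep p \<in> coboundaries"
  then have "coeff (coeff p 0) k = 0 \<and> coeff (coeff p 1) k = 0" for k
    using coboundary_vanishes_reduced reduced_x13_power by (metis ev_rep_x13_power)
  then show "coeff p 0 = 0 \<and> coeff p 1 = 0" by (simp add: poly_eq_iff)
next
  assume p: "coeff p 0 = 0 \<and> coeff p 1 = 0"
  obtain B where B: "\<And>i. degree (coeff p i) \<le> B" using inner_degree_bound by metis
  have "fa_smult (coeff (coeff p i) j) (cls_monom i j) \<in> coboundaries" for i j
  proof (cases "2 \<le> i")
    case False
    then have "i = 0 \<or> i = 1" by auto
    with p have "coeff p i = 0" by auto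
    then show ?thesis by simp
  qed (simp add: coboundaries_smult cls_monom_in_coboundaries)
  then show "ev_rep p \<in> coboundaries"
    unfolding ev_rep_eq_sum[OF order_refl B]
    by (intro coboundaries_sum) (simp_all add: fa_smult_def)
qed

lemma cocycle_cohomologous_ev_rep:
  assumes "z \<in> cocycles"
  shows "\<exists>p. cohomologous z (ev_rep p)"
proof -
  have fz: "fa_finsupp z" and dz: "fa_d z = 0" using assms by (simp_all add: cocycles_iff)
  let ?L = "length ` {w. z w \<noteq> 0}"
  have L: "finite ?L" using fz by (simp add: fa_finsupp_def)
  have "component n z \<in> cocycles" for n
    using fz dz by (simp add: cocycles_iff fa_d_component)
  then have "\<exists>l. component n z - fa_smult l (cocycle_rep n) \<in> coboundaries" for n
    using homogeneous_cocycle_cohomologous_rep homogeneous_component by blast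
  then obtain l where l: "\<And>n. component n z - fa_smult (l n) (cocycle_rep n) \<in> coboundaries"
    by metis
  define p where "p = (\<Sum>n\<in>?L. monom (monom (l n) (n div 2)) (n mod 2))"
  have "ev_rep p = (\<lambda>w. \<Sum>n\<in>?L. fa_smult (l n) (cocycle_rep n) w)"
    using L by (simp add: fun_eq_iff p_def ev_rep_sum ev_rep_monom cocycle_rep_def)
  then have "z - ev_rep p = (\<lambda>w. \<Sum>n\<in>?L. (component n z - fa_smult (l n) (cocycle_rep n)) w)"
    by (subst (1) sum_components[OF fz]) (simp add: fun_eq_iff sum_subtractf)
  also have "\<dots> \<in> coboundaries"
    using L l by (rule coboundaries_sum)
  finally show ?thesis by (auto simp: cohomologous_def fa_minus_eq)
qed

lemma commutator_cls_c_cls_u: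
  "fa_mult cls_c cls_u - fa_mult cls_u cls_c
    = (fa_d (lmult X1 (lmult X1 fa_one)) :: 'k::comm_ring_1 fa)"
proof -
  have "fa_mult cls_c cls_u
      = lmult X3 (lmult X1 (lmult X3 fa_one)) + lmult X3 (lmult X3 (lmult X1 (fa_one :: 'k fa)))"
    by (simp add: fa_mult_cls_c cls_u_eq lmult_add)
  moreover have "fa_mult cls_u cls_c
      = lmult X1 (lmult X3 (lmult X3 fa_one)) + lmult X3 (lmult X1 (lmult X3 (fa_one :: 'k fa)))"
    by (simp add: fa_mult_cls_u cls_c_def fa_gen_eq_lmult)
  ultimately show ?thesis by (simp add: fa_d_lmult_gen lmult_diff)
qed

text \<open>The argument works over any commutative ring.\<close>

theorem proposition2p1:
  fixes K :: "'k::{alg_closed_field, field_char_0} itself"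
  shows "(cls_c :: 'k fa) \<in> cocycles \<and> (cls_u :: 'k fa) \<in> cocycles
    \<and> fa_minus (fa_mult cls_c cls_u) (fa_mult cls_u (cls_c :: 'k fa)) \<in> coboundaries
    \<and> (\<forall>p :: 'k poly poly. ev_rep p \<in> coboundaries \<longleftrightarrow> [:0, 0, 1:] dvd p)
    \<and> (\<forall>z :: 'k fa. z \<in> cocycles \<longrightarrow> (\<exists>p :: 'k poly poly. cohomologous z (ev_rep p)))"
proof (intro conjI allI impI)
  show "cls_c \<in> cocycles" by (rule cls_c_in_cocycles)
  show "cls_u \<in> cocycles" by (rule cls_u_in_cocycles)
  show "fa_minus (fa_mult cls_c cls_u) (fa_mult cls_u (cls_c :: 'k fa)) \<in> coboundaries"
    unfolding fa_minus_eq commutator_cls_c_cls_u by (simp add: fa_d_in_coboundaries)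
  show "ev_rep p \<in> coboundaries \<longleftrightarrow> [:0, 0, 1:] dvd p" for p :: "'k poly poly"
    by (simp only: ev_rep_in_coboundaries_iff x_squared_dvd_iff)
  show "\<exists>p. cohomologous z (ev_rep p)" if "z \<in> cocycles" for z :: "'k fa"
    using that by (rule cocycle_cohomologous_ev_rep)
qed

end
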